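(* Let $\mathcal{M}$ be a matroid of rank $c$ on $[n]$, $J=J(\mathcal{M})$, and order $G(J)$ by the iterated-contraction order $\preceq$ along an ordered basis $(v_1,\ldots,v_c)$ (see context). Then for every $N\in G(J)$ with $N\ne\min G(J)$, $$C_N=J(\mathcal{M}/\{v_1,\ldots,v_{i_N+1}\}):N.$$ In particular, $C_N$ is a $C$-matroidal ideal.
   Context: $R=\mathbb{K}[x_1,\ldots,x_n]$, $\mathbb{K}$ a field. For a matroid $\mathcal{N}$ on $E\subseteq[n]$, $J(\mathcal{N})=\bigcap_{F\in\mathcal{B}(\mathcal{N})}(x_i:i\in F)$, formed in $\mathbb{K}[x_i:i\in E]$ and extended to $R$. $\mathcal{M}/A$ is contraction by an independent set $A$. $G(\cdot)$ is the set of minimal monomial generators. A squarefree monomial ideal is $C$-matroidal if it is the cover ideal of some matroid (equivalently the Stanley–Reisner ideal of the independence complex of a matroid). Order: $J_i=J(\mathcal{M}/\{v_1,\ldots,v_i\})$ for $0\le i\le c$; one has $G(J_c)\subseteq\cdots\subseteq G(J_0)=G(J)$. Choose any total order on each $G(J_i)-G(J_{i+1})$; for $N\in G(J)$ let $i_N$ be the index with $N\in G(J_i)-G(J_{i+1})$; set $N\prec N'$ iff $i_N>i_{N'}$, or $i_N=i_{N'}$ and $N$ precedes $N'$ in the chosen order on $G(J_{i_N})-G(J_{i_N+1})$. For $N\ne\min G(J)$, $C_N=(N'\in G(J):N'\prec N):N$. *)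

theory Defs
  imports Main
begin

text \<open>Monomials of R = K[x_1..x_n] are represented by exponent vectors (nat => nat)
 supported in {1..n}. A monomial ideal of R is represented by the set of monomials it
 contains (a monomial ideal is determined by this set).\<close>

type_synonym mono = "nat \<Rightarrow> nat"

definition rmonos :: "nat \<Rightarrow> mono set" where
  "rmonos n = {m. \<forall>i. m i \<noteq> 0 \<longrightarrow> i \<in> {1..n}}"

definition mmult :: "mono \<Rightarrow> mono \<Rightarrow> mono" where
  "mmult m m' = (\<lambda>i. m i + m' i)"

definition mdvd :: "mono \<Rightarrow> mono \<Rightarrow> bool" where
  "mdvd m m' \<longleftrightarrow> (\<forall>i. m i \<le> m' i)"

definition mideal_gen :: "nat \<Rightarrow> mono set \<Rightarrow> mono set" where
  "mideal_gen n S = {m \<in> rmonos n. \<exists>s\<in>S. mdvd s m}"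

definition mcolon :: "nat \<Rightarrow> mono set \<Rightarrow> mono \<Rightarrow> mono set" where
  "mcolon n I N = {m \<in> rmonos n. mmult m N \<in> I}"

definition mingens :: "mono set \<Rightarrow> mono set" where
  "mingens I = {m \<in> I. \<forall>m'\<in>I. mdvd m' m \<longrightarrow> m' = m}"

definition matroid :: "nat set \<Rightarrow> nat set set \<Rightarrow> bool" where
  "matroid E B \<longleftrightarrow> finite E \<and> B \<noteq> {} \<and> (\<forall>F\<in>B. F \<subseteq> E) \<and>
     (\<forall>B1\<in>B. \<forall>B2\<in>B. \<forall>x\<in>B1 - B2. \<exists>y\<in>B2 - B1. insert y (B1 - {x}) \<in> B)"

definition matroid_rank_eq :: "nat set set \<Rightarrow> nat \<Rightarrow> bool" where
  "matroid_rank_eq B c \<longleftrightarrow> (\<forall>F\<in>B. card F = c)"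

definition contract :: "nat set set \<Rightarrow> nat set \<Rightarrow> nat set set" where
  "contract B A = {F - A | F. F \<in> B \<and> A \<subseteq> F}"

text \<open>J(N) = intersection over bases F of (x_i : i in F), formed in K[x_i : i in E]
  and extended to R; as a set of monomials of R.\<close>
definition Jmat :: "nat \<Rightarrow> nat set set \<Rightarrow> mono set" where
  "Jmat n B = {m \<in> rmonos n. \<forall>F\<in>B. \<exists>i\<in>F. m i \<noteq> 0}"

definition C_matroidal :: "nat \<Rightarrow> mono set \<Rightarrow> bool" where
  "C_matroidal n I \<longleftrightarrow> (\<exists>E B. E \<subseteq> {1..n} \<and> matroid E B \<and> I = Jmat n B)"

definition Jseq :: "nat \<Rightarrow> nat set set \<Rightarrow> (nat \<Rightarrow> nat) \<Rightarrow> nat \<Rightarrow> mono set" where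
  "Jseq n B v i = Jmat n (contract B (v ` {1..i}))"

text \<open>i_N: the index i with N in G(J_i) - G(J_{i+1}) (note G(J_c) is empty)\<close>
definition idx :: "nat \<Rightarrow> nat set set \<Rightarrow> (nat \<Rightarrow> nat) \<Rightarrow> nat \<Rightarrow> mono \<Rightarrow> nat" where
  "idx n B v c N = (THE i. i < c \<and> N \<in> mingens (Jseq n B v i) \<and>
                          N \<notin> mingens (Jseq n B v (Suc i)))"

text \<open>The order N \<prec> N'; r is a strict total order on G(J) whose restriction to each
  block G(J_i) - G(J_{i+1}) is the chosen order on that block.\<close>
definition prec :: "nat \<Rightarrow> nat set set \<Rightarrow> (nat \<Rightarrow> nat) \<Rightarrow> nat \<Rightarrow> (mono \<times> mono) set
                     \<Rightarrow> mono \<Rightarrow> mono \<Rightarrow> bool" where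
  "prec n B v c r N N' \<longleftrightarrow> idx n B v c N > idx n B v c N' \<or>
     (idx n B v c N = idx n B v c N' \<and> (N, N') \<in> r)"

definition minG :: "nat \<Rightarrow> nat set set \<Rightarrow> (nat \<Rightarrow> nat) \<Rightarrow> nat \<Rightarrow> (mono \<times> mono) set \<Rightarrow> mono" where
  "minG n B v c r = (THE m. m \<in> mingens (Jmat n B) \<and>
       (\<forall>N'\<in>mingens (Jmat n B). N' \<noteq> m \<longrightarrow> prec n B v c r m N'))"

definition CN :: "nat \<Rightarrow> nat set set \<Rightarrow> (nat \<Rightarrow> nat) \<Rightarrow> nat \<Rightarrow> (mono \<times> mono) set \<Rightarrow> mono \<Rightarrow> mono set" where
  "CN n B v c r N = mcolon n
     (mideal_gen n {N' \<in> mingens (Jmat n B). prec n B v c r N' N}) N"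

end

theory Submission
  imports Defs
begin

text \<open>Put A_i = {v_1, ..., v_i}, so that J_i = J(M/A_i) consists of the monomials whose
  support meets F - A_i for every basis F containing A_i; its minimal generators are squarefree
  and vanish on A_i. Exchanging into the basis A_c shows J_(i+1) \<subseteq> J_i, hence
  G(J_(i+1)) \<subseteq> G(J_i), and i_N is the index at which N leaves this decreasing chain.
  Let i = i_N. Generators N' \<prec> N from later blocks lie in J_(i+1); for N' \<noteq> N in the same
  block both supports contain v_(i+1), and a basis exchange through v_(i+1) shows
  lcm(N, N') \<in> J_(i+1). Conversely every element of J_(i+1) is divisible by a generator from a
  later block. Finally J(\<B>) : N is the cover ideal of the bases of \<B> avoiding the support
  of N; these still satisfy the exchange axiom, and they exist because N \<notin> J_(i+1).\<close>

lemma matroid_exchange: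
  "matroid E B \<Longrightarrow> B1 \<in> B \<Longrightarrow> B2 \<in> B \<Longrightarrow> x \<in> B1 - B2
    \<Longrightarrow> \<exists>y\<in>B2 - B1. insert y (B1 - {x}) \<in> B"
  unfolding matroid_def by blast

lemma matroid_dual_exchange:
  assumes "matroid E B" "matroid_rank_eq B c"
    and "B1 \<in> B" "B2 \<in> B" "y \<in> B2 - B1"
  shows "\<exists>x\<in>B1 - B2. insert y (B1 - {x}) \<in> B"
  using assms(3-5)
proof (induction "card (B2 - B1)" arbitrary: B2 rule: less_induct)
  case less
  have fin: "finite B1" "finite B2"
    using assms(1) less.prems(1,2) unfolding matroid_def by (meson finite_subset)+
  show ?case
  proof (cases "B2 - B1 = {y}")
    case True
    have "card B1 = card B2" using assms(2) less.prems unfolding matroid_rank_eq_def by auto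
    hence "card (B1 - B2) = card (B2 - B1)"
      using card_Diff_subset_Int[of B1 B2] card_Diff_subset_Int[of B2 B1] fin
      by (simp add: Int_commute)
    then obtain x where x: "B1 - B2 = {x}" using True by (auto simp: card_1_singleton_iff)
    hence "insert y (B1 - {x}) = B2" using True by blast
    thus ?thesis using x less.prems by auto
  next
    case False
    then obtain z where z: "z \<in> B2 - B1" "z \<noteq> y" using less.prems by blast
    obtain w where w: "w \<in> B1 - B2" "insert w (B2 - {z}) \<in> B"
      using matroid_exchange[OF assms(1) less.prems(2,1)] z by blast
    let ?B2 = "insert w (B2 - {z})"
    have "?B2 - B1 = (B2 - B1) - {z}" using w by blast
    hence "card (?B2 - B1) < card (B2 - B1)"
      using z fin by (metis card_Diff1_less finite_Diff)
    moreover have "y \<in> ?B2 - B1" using less.prems z w by blast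
    ultimately obtain x where "x \<in> B1 - ?B2" "insert y (B1 - {x}) \<in> B"
      using less.hyps less.prems(1) w(2) by blast
    thus ?thesis using z by blast
  qed
qed

lemma matroid_contract:
  assumes "matroid E B" "contract B A \<noteq> {}"
  shows "matroid E (contract B A)"
  unfolding matroid_def
proof (intro conjI ballI)
  show "finite E" using assms(1) unfolding matroid_def by blast
  show "contract B A \<noteq> {}" by (fact assms(2))
next
  fix X assume "X \<in> contract B A"
  thus "X \<subseteq> E" using assms(1) unfolding matroid_def contract_def by blast
next
  fix B1 B2 x assume "B1 \<in> contract B A" "B2 \<in> contract B A" and x: "x \<in> B1 - B2"
  then obtain F1 F2 where F: "F1 \<in> B" "A \<subseteq> F1" "B1 = F1 - A" "F2 \<in> B" "A \<subseteq> F2" "B2 = F2 - A"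
    unfolding contract_def by blast
  have "x \<in> F1 - F2" "x \<notin> A" using x F by auto
  then obtain y where y: "y \<in> F2 - F1" "insert y (F1 - {x}) \<in> B"
    using matroid_exchange[OF assms(1) F(1,4)] by blast
  have "insert y (B1 - {x}) = insert y (F1 - {x}) - A" using F y by blast
  moreover have "A \<subseteq> insert y (F1 - {x})" using F \<open>x \<notin> A\<close> by blast
  ultimately have "insert y (B1 - {x}) \<in> contract B A" using y unfolding contract_def by blast
  moreover have "y \<in> B2 - B1" using F y by blast
  ultimately show "\<exists>y\<in>B2 - B1. insert y (B1 - {x}) \<in> contract B A" by blast
qed

lemma matroid_bases_avoiding:
  assumes "matroid E B" "{X \<in> B. X \<inter> S = {}} \<noteq> {}"
  shows "matroid E {X \<in> B. X \<inter> S = {}}"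
  unfolding matroid_def
proof (intro conjI ballI)
  show "finite E" using assms(1) unfolding matroid_def by blast
  show "{X \<in> B. X \<inter> S = {}} \<noteq> {}" by (fact assms(2))
next
  fix X assume "X \<in> {X \<in> B. X \<inter> S = {}}"
  thus "X \<subseteq> E" using assms(1) unfolding matroid_def by blast
next
  fix B1 B2 x assume B12: "B1 \<in> {X \<in> B. X \<inter> S = {}}" "B2 \<in> {X \<in> B. X \<inter> S = {}}"
    and "x \<in> B1 - B2"
  then obtain y where "y \<in> B2 - B1" "insert y (B1 - {x}) \<in> B"
    using matroid_exchange[OF assms(1)] by blast
  thus "\<exists>y\<in>B2 - B1. insert y (B1 - {x}) \<in> {X \<in> B. X \<inter> S = {}}"
    using B12 by blast
qed

lemma mmult_rmonos: "m \<in> rmonos n \<Longrightarrow> m' \<in> rmonos n \<Longrightarrow> mmult m m' \<in> rmonos n"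
  unfolding rmonos_def mmult_def by auto

lemma mdvd_nonzero: "mdvd m m' \<Longrightarrow> m j \<noteq> 0 \<Longrightarrow> m' j \<noteq> 0"
  unfolding mdvd_def by (metis le_zero_eq)

lemma ex_mingens_mdvd:
  assumes "I \<subseteq> rmonos n" "x \<in> I"
  shows "\<exists>y\<in>mingens I. mdvd y x"
proof -
  let ?P = "\<lambda>y. y \<in> I \<and> mdvd y x"
  let ?deg = "\<lambda>y::mono. sum y {1..n}"
  have "?P x" using assms(2) unfolding mdvd_def by auto
  then obtain y where y: "?P y" and least: "\<And>z. ?P z \<Longrightarrow> ?deg y \<le> ?deg z"
    using ex_has_least_nat[of ?P x ?deg] by blast
  have "z = y" if z: "z \<in> I" "mdvd z y" for z
  proof
    fix j
    show "z j = y j"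
    proof (cases "j \<in> {1..n}")
      case True
      have "?P z" using z y unfolding mdvd_def by (meson order_trans)
      hence "?deg y \<le> ?deg z" by (fact least)
      moreover have "z j < y j \<Longrightarrow> ?deg z < ?deg y"
        using True z(2) unfolding mdvd_def by (intro sum_strict_mono_ex1) auto
      ultimately show ?thesis using z(2) unfolding mdvd_def by (meson le_neq_implies_less not_le)
    next
      case False
      have "z \<in> rmonos n" "y \<in> rmonos n" using assms(1) z(1) y by auto
      hence "z j = 0" "y j = 0" using False unfolding rmonos_def by blast+
      thus ?thesis by simp
    qed
  qed
  thus ?thesis using y unfolding mingens_def by blast
qed

lemma Jmat_support_mono:
  "m \<in> Jmat n B \<Longrightarrow> m' \<in> rmonos n \<Longrightarrow> (\<And>j. m j \<noteq> 0 \<Longrightarrow> m' j \<noteq> 0) \<Longrightarrow> m' \<in> Jmat n B"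
  unfolding Jmat_def by blast

lemma Jmat_eq_empty: "{} \<in> B \<Longrightarrow> Jmat n B = {}"
  unfolding Jmat_def by blast

lemma mcolon_Jmat:
  assumes "N \<in> rmonos n"
  shows "mcolon n (Jmat n B) N = Jmat n {X \<in> B. X \<inter> {j. N j \<noteq> 0} = {}}"
proof (rule set_eqI)
  fix m
  have "mmult m N \<in> rmonos n \<longleftrightarrow> m \<in> rmonos n"
    using assms unfolding rmonos_def mmult_def by auto
  moreover have "(\<exists>j\<in>X. mmult m N j \<noteq> 0) \<longleftrightarrow> X \<inter> {j. N j \<noteq> 0} \<noteq> {} \<or> (\<exists>j\<in>X. m j \<noteq> 0)" for X
    unfolding mmult_def by auto
  ultimately show "m \<in> mcolon n (Jmat n B) N \<longleftrightarrow> m \<in> Jmat n {X \<in> B. X \<inter> {j. N j \<noteq> 0} = {}}"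
    using assms unfolding mcolon_def Jmat_def by auto
qed

lemma C_matroidal_mcolon_Jmat:
  assumes "E \<subseteq> {1..n}" "matroid E B" "N \<in> rmonos n" "N \<notin> Jmat n B"
  shows "C_matroidal n (mcolon n (Jmat n B) N)"
proof -
  have "{X \<in> B. X \<inter> {j. N j \<noteq> 0} = {}} \<noteq> {}" using assms(3,4) unfolding Jmat_def by blast
  hence "matroid E {X \<in> B. X \<inter> {j. N j \<noteq> 0} = {}}" by (rule matroid_bases_avoiding[OF assms(2)])
  thus ?thesis
    unfolding C_matroidal_def mcolon_Jmat[OF assms(3)] using assms(1) by blast
qed

lemma mingens_Jmat_squarefree:
  assumes "m \<in> mingens (Jmat n B)"
  shows "m j \<le> 1"
proof (rule ccontr)
  assume big: "\<not> m j \<le> 1"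
  have m: "m \<in> Jmat n B" using assms unfolding mingens_def by blast
  have "m(j := 1) \<in> Jmat n B"
    using m big by (intro Jmat_support_mono[OF m]) (auto simp: Jmat_def rmonos_def)
  moreover have "mdvd (m(j := 1)) m" using big unfolding mdvd_def by auto
  ultimately have "m(j := 1) = m" using assms unfolding mingens_def by blast
  thus False using big by (metis fun_upd_same order_refl)
qed

lemma mingens_Jmat_vanish:
  assumes "m \<in> mingens (Jmat n B)" "\<forall>X\<in>B. a \<notin> X"
  shows "m a = 0"
proof -
  have m: "m \<in> Jmat n B" using assms unfolding mingens_def by blast
  have "m(a := 0) \<in> Jmat n B"
    unfolding Jmat_def
  proof (intro CollectI conjI ballI)
    show "m(a := 0) \<in> rmonos n" using m unfolding Jmat_def rmonos_def by auto
    fix X assume "X \<in> B"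
    then obtain j where "j \<in> X" "m j \<noteq> 0" using m unfolding Jmat_def by blast
    thus "\<exists>j\<in>X. (m(a := 0)) j \<noteq> 0" using assms(2) \<open>X \<in> B\<close> by (intro bexI[of _ j]) auto
  qed
  moreover have "mdvd (m(a := 0)) m" unfolding mdvd_def by auto
  ultimately have "m(a := 0) = m" using assms unfolding mingens_def by blast
  thus ?thesis by (metis fun_upd_same)
qed

lemma mingens_Jmat_critical:
  assumes "m \<in> mingens (Jmat n B)" "m e \<noteq> 0"
  obtains X where "X \<in> B" "e \<in> X" "\<And>j. j \<in> X \<Longrightarrow> m j \<noteq> 0 \<Longrightarrow> j = e"
proof -
  have m: "m \<in> Jmat n B" using assms unfolding mingens_def by blast
  have "m(e := 0) \<in> rmonos n" using m unfolding Jmat_def rmonos_def by auto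
  moreover have "mdvd (m(e := 0)) m" unfolding mdvd_def by auto
  moreover have "m(e := 0) \<noteq> m" using assms(2) by (metis fun_upd_same)
  ultimately have "m(e := 0) \<notin> Jmat n B" using assms(1) unfolding mingens_def by blast
  then obtain X where X: "X \<in> B" "\<And>j. j \<in> X \<Longrightarrow> j \<noteq> e \<Longrightarrow> m j = 0"
    using \<open>m(e := 0) \<in> rmonos n\<close> unfolding Jmat_def by fastforce
  moreover obtain j where "j \<in> X" "m j \<noteq> 0" using m X(1) unfolding Jmat_def by blast
  ultimately show ?thesis using that by metis
qed

lemma mingens_Jmat_support_not_subset:
  assumes "N \<in> mingens (Jmat n B)" "N' \<in> mingens (Jmat n B)" "N \<noteq> N'"
  obtains e where "N e \<noteq> 0" "N' e = 0"
proof (rule ccontr)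
  assume "\<not> thesis"
  hence "N j \<noteq> 0 \<Longrightarrow> N' j \<noteq> 0" for j using that by blast
  hence "mdvd N N'"
    using mingens_Jmat_squarefree[OF assms(1)] unfolding mdvd_def
    by (metis One_nat_def Suc_leI le_0_eq not_gr0 order_trans)
  hence "N = N'" using assms(1,2) unfolding mingens_def by blast
  thus False using assms(3) by blast
qed

lemma Jmat_contract_iff:
  "m \<in> Jmat n (contract B A) \<longleftrightarrow> m \<in> rmonos n \<and> (\<forall>F\<in>B. A \<subseteq> F \<longrightarrow> (\<exists>j\<in>F - A. m j \<noteq> 0))"
  unfolding Jmat_def contract_def by blast

lemma mingens_Jmat_contract_vanish:
  "m \<in> mingens (Jmat n (contract B A)) \<Longrightarrow> a \<in> A \<Longrightarrow> m a = 0"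
  by (erule mingens_Jmat_vanish) (auto simp: contract_def)

lemma Jmat_contract_insert:
  assumes "m \<in> Jmat n (contract B A)" "m u = 0"
  shows "m \<in> Jmat n (contract B (insert u A))"
  using assms unfolding Jmat_contract_iff by (metis Diff_iff insert_iff insert_subset)

lemma Jmat_contract_insert_subset:
  assumes "matroid E B" "matroid_rank_eq B c" "V \<in> B" "insert u A \<subseteq> V"
  shows "Jmat n (contract B (insert u A)) \<subseteq> Jmat n (contract B A)"
proof
  fix m assume m: "m \<in> Jmat n (contract B (insert u A))"
  show "m \<in> Jmat n (contract B A)"
    unfolding Jmat_contract_iff
  proof (intro conjI ballI impI)
    show "m \<in> rmonos n" using m unfolding Jmat_contract_iff by blast
    fix F assume F: "F \<in> B" "A \<subseteq> F"
    show "\<exists>j\<in>F - A. m j \<noteq> 0"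
    proof (cases "u \<in> F")
      case True
      thus ?thesis using m F unfolding Jmat_contract_iff by blast
    next
      case False
      then obtain x where x: "x \<in> F - V" "insert u (F - {x}) \<in> B"
        using matroid_dual_exchange[OF assms(1,2) F(1) assms(3)] assms(4) by blast
      have "insert u A \<subseteq> insert u (F - {x})" using F x assms(4) by blast
      then obtain j where "j \<in> insert u (F - {x}) - insert u A" "m j \<noteq> 0"
        using m x(2) unfolding Jmat_contract_iff by blast
      thus ?thesis by blast
    qed
  qed
qed

lemma mingens_Jmat_contract_insert_subset:
  assumes "Jmat n (contract B (insert u A)) \<subseteq> Jmat n (contract B A)"
  shows "mingens (Jmat n (contract B (insert u A))) \<subseteq> mingens (Jmat n (contract B A))"
proof
  fix m assume m: "m \<in> mingens (Jmat n (contract B (insert u A)))"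
  have "m u = 0" using mingens_Jmat_contract_vanish[OF m] by blast
  have "m' = m" if "m' \<in> Jmat n (contract B A)" "mdvd m' m" for m'
  proof -
    have "m' u = 0" using \<open>m u = 0\<close> mdvd_nonzero[OF that(2)] by blast
    with that(1) have "m' \<in> Jmat n (contract B (insert u A))" by (rule Jmat_contract_insert)
    thus ?thesis using m that(2) unfolding mingens_def by blast
  qed
  thus "m \<in> mingens (Jmat n (contract B A))" using m assms unfolding mingens_def by blast
qed

text \<open>If some basis F \<supseteq> insert u A were uncovered, take e in the support of N but not of N'
  and a basis G covered by N only at e. Exchanging some y \<in> G into F in place of u gives a basis
  that N and N' can only cover at y; so y = e, which N' misses.\<close>
lemma mmult_mingens_Jmat_contract_insert:
  assumes "matroid E B"
    and N: "N \<in> mingens (Jmat n (contract B A))" and N': "N' \<in> mingens (Jmat n (contract B A))"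
    and "N \<noteq> N'" and Nu: "N u \<noteq> 0" and N'u: "N' u \<noteq> 0"
  shows "mmult N N' \<in> Jmat n (contract B (insert u A))"
  unfolding Jmat_contract_iff
proof (intro conjI ballI impI)
  have NJ: "N \<in> Jmat n (contract B A)" and N'J: "N' \<in> Jmat n (contract B A)"
    using N N' unfolding mingens_def by blast+
  thus "mmult N N' \<in> rmonos n" using mmult_rmonos unfolding Jmat_def by blast
  fix F assume F: "F \<in> B" "insert u A \<subseteq> F"
  show "\<exists>j\<in>F - insert u A. mmult N N' j \<noteq> 0"
  proof (rule ccontr)
    assume "\<not> ?thesis"
    hence uncovered: "N j = 0 \<and> N' j = 0" if "j \<in> F" "j \<notin> insert u A" for j
      using that unfolding mmult_def by auto
    obtain e where e: "N e \<noteq> 0" "N' e = 0"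
      using mingens_Jmat_support_not_subset[OF N N' \<open>N \<noteq> N'\<close>] .
    obtain X where X: "X \<in> contract B A" "e \<in> X" "\<And>j. j \<in> X \<Longrightarrow> N j \<noteq> 0 \<Longrightarrow> j = e"
      using mingens_Jmat_critical[OF N e(1)] by blast
    then obtain G where G: "G \<in> B" "A \<subseteq> G" "X = G - A" unfolding contract_def by blast
    have "u \<notin> A" using mingens_Jmat_contract_vanish[OF N] Nu by metis
    have "u \<notin> G"
    proof
      assume "u \<in> G"
      hence "u = e" using X(3) G(3) \<open>u \<notin> A\<close> Nu by blast
      thus False using N'u e(2) by simp
    qed
    then obtain y where y: "y \<in> G - F" "insert y (F - {u}) \<in> B"
      using matroid_exchange[OF assms(1) F(1) G(1)] F(2) by blast
    have "A \<subseteq> insert y (F - {u})" using F(2) \<open>u \<notin> A\<close> by blast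
    hence covered: "\<exists>j\<in>insert y (F - {u}) - A. M j \<noteq> 0" if "M \<in> Jmat n (contract B A)" for M
      using that y(2) unfolding Jmat_contract_iff by simp
    have only_y: "j = y" if "j \<in> insert y (F - {u}) - A" "N j \<noteq> 0 \<or> N' j \<noteq> 0" for j
    proof (rule ccontr)
      assume "j \<noteq> y"
      hence "j \<in> F" "j \<notin> insert u A" using that(1) by auto
      thus False using uncovered that(2) by simp
    qed
    have "y \<notin> A" using y(1) F(2) by blast
    have "N y \<noteq> 0" using covered[OF NJ] only_y by blast
    moreover have "y \<in> X" using G(3) y(1) \<open>y \<notin> A\<close> by blast
    ultimately have "y = e" using X(3) by blast
    moreover have "N' y \<noteq> 0" using covered[OF N'J] only_y by blast
    ultimately show False using e(2) by simp
  qed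
qed

lemma antitone_le:
  fixes S :: "nat \<Rightarrow> 'a set"
  assumes "\<And>i. i < c \<Longrightarrow> S (Suc i) \<subseteq> S i" "i \<le> j" "j \<le> c"
  shows "S j \<subseteq> S i"
  using assms(2,3)
proof (induction j rule: dec_induct)
  case (step j)
  thus ?case using assms(1)[of j] by simp
qed simp

lemma antitone_mem_iff_le:
  fixes S :: "nat \<Rightarrow> 'a set"
  assumes anti: "\<And>i. i < c \<Longrightarrow> S (Suc i) \<subseteq> S i"
    and "k < c" "x \<in> S k" "x \<notin> S (Suc k)" "j \<le> c"
  shows "x \<in> S j \<longleftrightarrow> j \<le> k"
proof
  assume "x \<in> S j"
  show "j \<le> k"
  proof (rule ccontr)
    assume "\<not> j \<le> k"
    hence "S j \<subseteq> S (Suc k)" using antitone_le[where S = S and c = c, OF anti] assms(5) by simp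
    thus False using \<open>x \<in> S j\<close> assms(4) by blast
  qed
next
  assume "j \<le> k"
  thus "x \<in> S j" using antitone_le[where S = S and c = c, OF anti, of j k] assms(2,3) by auto
qed

lemma antitone_exit_index:
  fixes S :: "nat \<Rightarrow> 'a set"
  assumes anti: "\<And>i. i < c \<Longrightarrow> S (Suc i) \<subseteq> S i" and "x \<in> S 0" "x \<notin> S c"
  shows "\<exists>!k. k < c \<and> x \<in> S k \<and> x \<notin> S (Suc k)"
proof -
  obtain k where k: "k < c" "x \<in> S k" "x \<notin> S (Suc k)"
    using ex_least_nat_less[of "\<lambda>j. x \<notin> S j" c] assms(2,3) by blast
  moreover have "k' = k" if "k' < c" "x \<in> S k'" "x \<notin> S (Suc k')" for k'
    using antitone_mem_iff_le[OF anti k, of k'] antitone_mem_iff_le[OF anti that, of k] that k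
    by simp
  ultimately show ?thesis by blast
qed

locale ordered_basis =
  fixes n c :: nat and B :: "nat set set" and v :: "nat \<Rightarrow> nat"
  assumes matroid: "matroid {1..n} B" and rank: "matroid_rank_eq B c"
    and basis: "v ` {1..c} \<in> B"
begin

abbreviation J :: "nat \<Rightarrow> mono set" where "J i \<equiv> Jseq n B v i"
abbreviation G :: "nat \<Rightarrow> mono set" where "G i \<equiv> mingens (J i)"
abbreviation level :: "mono \<Rightarrow> nat" where "level N \<equiv> idx n B v c N"

lemma J_eq: "J i = Jmat n (contract B (v ` {1..i}))"
  unfolding Jseq_def ..

lemma image_Suc: "v ` {1..Suc i} = insert (v (Suc i)) (v ` {1..i})"
  by (simp add: atLeastAtMostSuc_conv)

lemma J_0: "J 0 = Jmat n B"
  unfolding J_eq contract_def by simp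

lemma J_rmonos: "J i \<subseteq> rmonos n"
  unfolding J_eq Jmat_def by blast

lemma J_Suc_subset: "i < c \<Longrightarrow> J (Suc i) \<subseteq> J i"
  unfolding J_eq image_Suc by (rule Jmat_contract_insert_subset[OF matroid rank basis]) auto

lemma G_Suc_subset: "i < c \<Longrightarrow> G (Suc i) \<subseteq> G i"
  using J_Suc_subset unfolding J_eq image_Suc by (rule mingens_Jmat_contract_insert_subset)

lemma G_c: "G c = {}"
proof -
  have "{} \<in> contract B (v ` {1..c})" using basis unfolding contract_def by blast
  thus ?thesis unfolding J_eq mingens_def by (simp add: Jmat_eq_empty)
qed

lemma level:
  assumes "N \<in> G 0"
  shows "level N < c" "N \<in> G (level N)" "N \<notin> G (Suc (level N))"
proof -
  have "\<exists>!k. k < c \<and> N \<in> G k \<and> N \<notin> G (Suc k)"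
    using antitone_exit_index[where S = G, OF G_Suc_subset assms] G_c by blast
  from theI'[OF this] show "level N < c" "N \<in> G (level N)" "N \<notin> G (Suc (level N))"
    unfolding idx_def by blast+
qed

lemma G_iff_le_level: "N \<in> G 0 \<Longrightarrow> j \<le> c \<Longrightarrow> N \<in> G j \<longleftrightarrow> j \<le> level N"
  using antitone_mem_iff_le[where S = G, OF G_Suc_subset level] by blast

lemma not_in_J_Suc_level:
  assumes "N \<in> G 0"
  shows "N \<notin> J (Suc (level N))"
proof
  assume "N \<in> J (Suc (level N))"
  moreover have "J (Suc (level N)) \<subseteq> J (level N)" using J_Suc_subset level(1)[OF assms] .
  ultimately have "N \<in> G (Suc (level N))" using level(2)[OF assms] unfolding mingens_def by blast
  thus False using level(3)[OF assms] by blast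
qed

lemma level_var_in_support:
  assumes "N \<in> G 0"
  shows "N (v (Suc (level N))) \<noteq> 0"
  using Jmat_contract_insert[of N n B "v ` {1..level N}"] level(2)[OF assms]
    not_in_J_Suc_level[OF assms]
  unfolding J_eq image_Suc mingens_def by blast

lemma mmult_in_J_Suc_level:
  assumes "N \<in> G 0" "N' \<in> G 0" "level N' = level N" "N \<noteq> N'"
  shows "mmult N N' \<in> J (Suc (level N))"
  using mmult_mingens_Jmat_contract_insert[OF matroid _ _ assms(4)]
    level(2)[OF assms(1)] level(2)[OF assms(2)]
    level_var_in_support[OF assms(1)] level_var_in_support[OF assms(2)] assms(3)
  unfolding J_eq image_Suc by simp

lemma prec_mdvd_in_J_Suc_level:
  assumes "irrefl r" "N \<in> G 0" "N' \<in> G 0" "prec n B v c r N' N"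
    and "mdvd N' M" "mdvd N M" "M \<in> rmonos n"
  shows "M \<in> J (Suc (level N))"
proof (cases "level N < level N'")
  case True
  hence "N' \<in> G (Suc (level N))" using G_iff_le_level[OF assms(3)] level(1)[OF assms(3)] by simp
  hence "N' \<in> J (Suc (level N))" unfolding mingens_def by blast
  thus ?thesis using Jmat_support_mono assms(7) mdvd_nonzero[OF assms(5)] unfolding J_eq by blast
next
  case False
  hence "level N' = level N" "(N', N) \<in> r" using assms(4) unfolding prec_def by auto
  moreover from this(2) have "N \<noteq> N'" using assms(1) by (auto simp: irrefl_def)
  ultimately have "mmult N N' \<in> J (Suc (level N))" using mmult_in_J_Suc_level assms(2,3) by blast
  moreover have "mmult N N' j \<noteq> 0 \<Longrightarrow> M j \<noteq> 0" for j
    using mdvd_nonzero assms(5,6) unfolding mmult_def by auto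
  ultimately show ?thesis using Jmat_support_mono assms(7) unfolding J_eq by blast
qed

lemma J_Suc_level_prec_divisor:
  assumes "N \<in> G 0" "M \<in> J (Suc (level N))"
  obtains N' where "N' \<in> G 0" "prec n B v c r N' N" "mdvd N' M"
proof -
  obtain N' where N': "N' \<in> G (Suc (level N))" "mdvd N' M"
    using ex_mingens_mdvd[OF J_rmonos assms(2)] by blast
  have N'0: "N' \<in> G 0"
    using N'(1) antitone_le[where S = G and c = c and i = 0 and j = "Suc (level N)", OF G_Suc_subset]
      level(1)[OF assms(1)] by auto
  moreover have "Suc (level N) \<le> level N'"
    using G_iff_le_level[OF N'0] N'(1) level(1)[OF assms(1)] by simp
  ultimately show ?thesis using that N'(2) unfolding prec_def by simp
qed

lemma CN_eq_mcolon:
  assumes "irrefl r" "N \<in> G 0"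
  shows "CN n B v c r N = mcolon n (J (Suc (level N))) N"
proof (rule set_eqI)
  fix m
  have N: "N \<in> rmonos n" using assms(2) J_rmonos unfolding mingens_def by blast
  let ?M = "mmult m N"
  have "mdvd N ?M" unfolding mdvd_def mmult_def by simp
  have "m \<in> CN n B v c r N \<longleftrightarrow>
      m \<in> rmonos n \<and> ?M \<in> rmonos n \<and> (\<exists>N'\<in>G 0. prec n B v c r N' N \<and> mdvd N' ?M)"
    unfolding CN_def mcolon_def mideal_gen_def J_0 by blast
  also have "\<dots> \<longleftrightarrow> m \<in> rmonos n \<and> ?M \<in> J (Suc (level N))"
    using prec_mdvd_in_J_Suc_level[OF assms, of _ ?M] \<open>mdvd N ?M\<close>
      J_Suc_level_prec_divisor[OF assms(2), of ?M] mmult_rmonos[OF _ N] by blast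
  also have "\<dots> \<longleftrightarrow> m \<in> mcolon n (J (Suc (level N))) N"
    unfolding mcolon_def by blast
  finally show "m \<in> CN n B v c r N \<longleftrightarrow> m \<in> mcolon n (J (Suc (level N))) N" .
qed

lemma C_matroidal_mcolon_J_Suc_level:
  assumes "N \<in> G 0"
  shows "C_matroidal n (mcolon n (J (Suc (level N))) N)"
proof -
  let ?A = "v ` {1..Suc (level N)}"
  have "?A \<subseteq> v ` {1..c}" using level(1)[OF assms] by auto
  hence "v ` {1..c} - ?A \<in> contract B ?A" using basis unfolding contract_def by blast
  hence "matroid {1..n} (contract B ?A)" using matroid_contract[OF matroid] by blast
  moreover have "N \<in> rmonos n" using assms J_rmonos unfolding mingens_def by blast
  ultimately show ?thesis
    using C_matroidal_mcolon_Jmat[OF order_refl] not_in_J_Suc_level[OF assms]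
    unfolding J_eq by blast
qed

end

theorem corollary4p12:
  fixes n c :: nat and B :: "nat set set" and v :: "nat \<Rightarrow> nat"
    and r :: "(mono \<times> mono) set" and N :: mono
  assumes "matroid {1..n} B"
    and "matroid_rank_eq B c"
    and "inj_on v {1..c}" and "v ` {1..c} \<in> B"
    and "strict_linear_order_on (mingens (Jmat n B)) r"
    and "N \<in> mingens (Jmat n B)"
    and "N \<noteq> minG n B v c r"
  shows "CN n B v c r N = mcolon n (Jseq n B v (Suc (idx n B v c N))) N
         \<and> C_matroidal n (CN n B v c r N)"
proof -
  interpret ordered_basis n c B v using assms(1,2,4) by unfold_locales
  have N: "N \<in> G 0" using assms(6) J_0 by simp
  have "irrefl r" using assms(5) unfolding strict_linear_order_on_def by blast
  from CN_eq_mcolon[OF this N] C_matroidal_mcolon_J_Suc_level[OF N] show ?thesis by simp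
qed

end
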